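(* Let $p>0$ and $a_k=k^p$, $k\ge1$. Then $\lim_{N\to\infty}E[U_j^N]=I(\alpha;j)<\infty$ for all $j\ge2$.
   Context: For $N\ge2$, coupon type $k\in\{1,\dots,N\}$ has probability $a_k/\sum_{i=1}^Na_i$; $U_j^N$ is the number of empty album places of the $j$-th collector when the first collector completes her set (each collector passes duplicates to the next one), with $$E[U_j^N]=\sum_{k=1}^N\int_0^\infty a_k e^{-a_k t}\frac{(a_kt)^{j-1}}{(j-1)!}\prod_{i\ne k,\,1\le i\le N}\big(1-e^{-a_i t}\big)\,dt.$$ $x_\alpha:=\inf\{x\in[0,1]:\sum_k x^{a_k}=\infty\}$, $L(x;\alpha;j):=\sum_{k}a_k^j\frac{x^{a_k}}{1-x^{a_k}}$, $F(x;\alpha):=\prod_{k}(1-x^{a_k})$, $I(\alpha;j):=\frac{1}{(j-1)!}\int_0^{x_\alpha}L(x;\alpha;j)F(x;\alpha)|\ln x|^{j-1}\frac{dx}{x}$. *)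

theory Defs
  imports "HOL-Analysis.Analysis"
begin

text \<open>The weights are a sequence a :: nat => real, used only at indices k >= 1.\<close>

definition EU :: "(nat \<Rightarrow> real) \<Rightarrow> nat \<Rightarrow> nat \<Rightarrow> real" where
  "EU a N j = (\<Sum>k\<in>{1..N}. LBINT t:{0..}.
      a k * exp (- a k * t) * (a k * t) ^ (j - 1) / fact (j - 1)
      * (\<Prod>i\<in>{1..N} - {k}. (1 - exp (- a i * t))))"

definition x_alpha :: "(nat \<Rightarrow> real) \<Rightarrow> real" where
  "x_alpha a = Inf {x \<in> {0..1}. \<not> summable (\<lambda>k. x powr a (Suc k))}"

definition Lfun :: "(nat \<Rightarrow> real) \<Rightarrow> real \<Rightarrow> nat \<Rightarrow> real" where
  "Lfun a x j = (\<Sum>k. a (Suc k) ^ j * x powr a (Suc k) / (1 - x powr a (Suc k)))"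

definition Ffun :: "(nat \<Rightarrow> real) \<Rightarrow> real \<Rightarrow> real" where
  "Ffun a x = (\<Prod>k. 1 - x powr a (Suc k))"

definition Iint_integrand :: "(nat \<Rightarrow> real) \<Rightarrow> nat \<Rightarrow> real \<Rightarrow> real" where
  "Iint_integrand a j x = Lfun a x j * Ffun a x * \<bar>ln x\<bar> ^ (j - 1) / x"

definition Iint :: "(nat \<Rightarrow> real) \<Rightarrow> nat \<Rightarrow> real" where
  "Iint a j = 1 / fact (j - 1) * (LBINT x:{0<..<x_alpha a}. Iint_integrand a j x)"

end

(*
  Written as an integral over t, E[U_j^N] is the integral of a finite sum of Erlang(j-1, a_k)
  densities times survival factors 1 - e^{-a_i t}.  For t > 0 the weights a_k = k^p satisfy
  sum_k a_k^r e^{-a_k t} < \<infinity> (which also gives x_alpha = 1), so the integrand converges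
  pointwise to the integrand of I(alpha; j) after the substitution x = e^{-t}.  The integrals
  converge by dominated convergence: dropping the factors with i > k bounds the k-th summand by an
  N-independent term q_k, and keeping only the factors with a_i \<le> a_k/4 (about k 4^{-1/p} of them)
  shows that the integral of q_k is O(1/k^2).
*)

theory Submission
  imports Defs "HOL-Probability.Distributions"
begin

lemma exp_neg_le_fact_div_power:
  fixes z :: real assumes "0 < z"
  shows "exp (- z) \<le> fact m / z ^ m"
proof -
  have "z ^ m / fact m \<le> (\<Sum>i. z ^ i / fact i)"
    using summable_exp_generic[of z] assms
    by (intro sum_le_suminf[where I = "{m}", simplified]) (auto simp: divide_inverse mult.commute)
  also have "\<dots> = exp z" by (simp add: exp_def scaleR_conv_of_real divide_inverse mult.commute)
  finally show ?thesis using assms by (simp add: exp_minus field_simps)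
qed

lemma summable_powr_weights_exp:
  fixes p t :: real assumes p: "0 < p" and t: "0 < t"
  shows "summable (\<lambda>k. (real (Suc k) powr p) ^ r * exp (- (real (Suc k) powr p) * t))"
proof -
  define m where "m = r + nat \<lceil>2 / p\<rceil>"
  have decay: "real (m - r) * p \<ge> 2"
    using p by (simp add: m_def) (metis ceiling_divide_upper mult.commute real_nat_ceiling_ge order_trans)
  have "summable (\<lambda>k. real k powr (- real (m - r) * p))"
    using decay by (subst summable_real_powr_iff) linarith
  then have "summable (\<lambda>k. fact m / t ^ m * real (Suc k) powr (- real (m - r) * p))"
    by (subst (asm) summable_Suc_iff[symmetric]) (rule summable_mult)
  then show ?thesis
  proof (rule summable_comparison_test'[where N = 0])
    fix k :: nat
    define y where "y = real (Suc k) powr p"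
    have y1: "1 \<le> y" using p by (simp add: y_def ge_one_powr_ge_zero)
    have "y ^ r * exp (- y * t) \<le> y ^ r * (fact m / (y * t) ^ m)"
      using exp_neg_le_fact_div_power[of "y * t" m] y1 t by (intro mult_left_mono) auto
    also have "\<dots> = fact m / t ^ m / y ^ (m - r)"
      using y1 by (simp add: m_def power_add power_mult_distrib field_simps)
    also have "y ^ (m - r) = real (Suc k) powr (real (m - r) * p)"
      by (simp add: y_def powr_power mult.commute)
    finally show "norm (y ^ r * exp (- y * t))
        \<le> fact m / t ^ m * real (Suc k) powr (- real (m - r) * p)"
      using y1 by (simp add: powr_minus divide_inverse)
  qed
qed

lemma x_alpha_powr_weights:
  assumes p: "0 < p" shows "x_alpha (\<lambda>k. real k powr p) = 1"
proof -
  have "{x \<in> {0..1}. \<not> summable (\<lambda>k. x powr (real (Suc k) powr p))} = {1}"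
  proof (intro equalityI subsetI)
    fix x assume x: "x \<in> {x \<in> {0..1}. \<not> summable (\<lambda>k. x powr (real (Suc k) powr p))}"
    have "0 < x" using x by (cases "x = 0") auto
    moreover have "x \<ge> 1"
    proof (rule ccontr)
      assume "\<not> x \<ge> 1"
      then have "summable (\<lambda>k. (real (Suc k) powr p) ^ 0 * exp (- (real (Suc k) powr p) * - ln x))"
        using \<open>0 < x\<close> by (intro summable_powr_weights_exp p) simp
      then show False using x \<open>0 < x\<close> by (simp add: powr_def mult.commute)
    qed
    ultimately show "x \<in> {1}" using x by simp
  qed (simp add: summable_const_iff)
  then show ?thesis unfolding x_alpha_def by simp
qed

lemma integrable_erlang_density:
  assumes "0 < l" shows "integrable lborel (erlang_density n l)"
proof (rule integrableI_nonneg)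
  show "(\<integral>\<^sup>+t. ennreal (erlang_density n l t) \<partial>lborel) < \<infinity>"
    using nn_integral_erlang_ith_moment[OF assms, of n 0] by simp
qed (use assms in auto)

lemma prod_one_minus_exp_neg_bounds:
  fixes t :: real
  assumes "\<And>i. i \<in> A \<Longrightarrow> 0 \<le> a i" and "0 \<le> t"
  shows "0 \<le> (\<Prod>i\<in>A. 1 - exp (- a i * t))" and "(\<Prod>i\<in>A. 1 - exp (- a i * t)) \<le> 1"
  using assms by (auto intro!: prod_nonneg prod_le_1)

lemma prod_le_prod_subset:
  fixes f :: "'a \<Rightarrow> real"
  assumes "finite A" "B \<subseteq> A" "\<And>x. x \<in> A \<Longrightarrow> 0 \<le> f x \<and> f x \<le> 1"
  shows "prod f A \<le> prod f B"
proof -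
  have "prod f A = prod f (A - B) * prod f B" using assms by (intro prod.subset_diff) auto
  also have "\<dots> \<le> prod f B"
    using assms by (intro mult_left_le_one_le prod_le_1 prod_nonneg) auto
  finally show ?thesis .
qed

(* erlang_density vanishes on negative arguments, so the restriction of the integrals in EU to
   {0..} is built in. *)
definition collector_density :: "(nat \<Rightarrow> real) \<Rightarrow> nat \<Rightarrow> nat \<Rightarrow> real \<Rightarrow> real" where
  "collector_density a n N t =
     (\<Sum>k\<in>{1..N}. erlang_density n (a k) t * (\<Prod>i\<in>{1..N} - {k}. 1 - exp (- a i * t)))"

lemma collector_density_measurable[measurable]:
  "collector_density a n N \<in> borel_measurable borel"
  unfolding collector_density_def by measurable

lemma collector_density_nonneg:
  assumes "\<And>i. 0 \<le> a i" shows "0 \<le> collector_density a n N t"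
proof (cases "t < 0")
  case False
  then show ?thesis
    unfolding collector_density_def using assms prod_one_minus_exp_neg_bounds(1)[of _ a t]
    by (intro sum_nonneg mult_nonneg_nonneg erlang_density_nonneg) auto
qed (simp add: collector_density_def erlang_density_def)

lemma EU_eq_integral_collector_density:
  assumes pos: "\<And>k. 1 \<le> k \<Longrightarrow> 0 < a k"
  shows "EU a N (Suc n) = (LINT t|lborel. collector_density a n N t)"
proof -
  define P where "P k t = (\<Prod>i\<in>{1..N} - {k}. 1 - exp (- a i * t))" for k t
  have "EU a N (Suc n) = (\<Sum>k\<in>{1..N}. LINT t|lborel. erlang_density n (a k) t * P k t)"
    unfolding EU_def set_lebesgue_integral_def P_def
    by (intro sum.cong refl Bochner_Integration.integral_cong)
       (auto simp: erlang_density_def power_mult_distrib indicator_def)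
  also have "\<dots> = (LINT t|lborel. (\<Sum>k\<in>{1..N}. erlang_density n (a k) t * P k t))"
  proof (rule Bochner_Integration.integral_sum[symmetric])
    fix k assume "k \<in> {1..N}"
    then have "0 < a k" using pos by simp
    then show "integrable lborel (\<lambda>t. erlang_density n (a k) t * P k t)"
    proof (rule Bochner_Integration.integrable_bound[OF integrable_erlang_density])
      show "AE t in lborel. norm (erlang_density n (a k) t * P k t) \<le> norm (erlang_density n (a k) t)"
      proof (rule AE_I2)
        fix t :: real
        show "norm (erlang_density n (a k) t * P k t) \<le> norm (erlang_density n (a k) t)"
        proof (cases "t < 0")
          case False
          have "0 \<le> a i" if "i \<in> {1..N} - {k}" for i using pos that by (simp add: less_imp_le)
          then show ?thesis
            using False prod_one_minus_exp_neg_bounds[of "{1..N} - {k}" a t] \<open>0 < a k\<close>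
            by (auto simp: P_def abs_mult intro!: mult_left_le)
        qed (simp add: erlang_density_def)
      qed
    qed (simp add: P_def)
  qed
  finally show ?thesis unfolding P_def collector_density_def .
qed

(* The integrand of Iint a (Suc n), including its factor 1 / fact n, after substituting x = exp (- t). *)
definition limit_density :: "(nat \<Rightarrow> real) \<Rightarrow> nat \<Rightarrow> real \<Rightarrow> real" where
  "limit_density a n t =
     (if 0 < t then Lfun a (exp (- t)) (Suc n) * Ffun a (exp (- t)) * t ^ n / fact n else 0)"

lemma collector_density_eq_product:
  assumes pos: "\<And>k. 1 \<le> k \<Longrightarrow> 0 < a k" and t: "0 < t"
  shows "collector_density a n N t = (\<Prod>i\<in>{1..N}. 1 - exp (- a i * t)) *
           (t ^ n / fact n * (\<Sum>k\<in>{1..N}. a k ^ Suc n * exp (- a k * t) / (1 - exp (- a k * t))))"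
  unfolding collector_density_def sum_distrib_left
proof (rule sum.cong[OF refl])
  fix k assume k: "k \<in> {1..N}"
  have "1 - exp (- a k * t) \<noteq> 0" using pos[of k] k t by simp
  moreover have "(\<Prod>i\<in>{1..N}. 1 - exp (- a i * t))
      = (1 - exp (- a k * t)) * (\<Prod>i\<in>{1..N} - {k}. 1 - exp (- a i * t))"
    using k by (simp add: prod.remove)
  ultimately show "erlang_density n (a k) t * (\<Prod>i\<in>{1..N} - {k}. 1 - exp (- a i * t))
      = (\<Prod>i\<in>{1..N}. 1 - exp (- a i * t)) *
        (t ^ n / fact n * (a k ^ Suc n * exp (- a k * t) / (1 - exp (- a k * t))))"
    using t by (simp only:) (simp add: erlang_density_def field_simps)
qed

lemma LIMSEQ_prod_one_minus:
  fixes f :: "nat \<Rightarrow> real"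
  assumes "summable (\<lambda>k. norm (f (Suc k)))"
  shows "(\<lambda>N. \<Prod>i\<in>{1..N}. 1 - f i) \<longlonglongrightarrow> (\<Prod>k. 1 - f (Suc k))"
proof -
  have "convergent_prod (\<lambda>k. 1 - f (Suc k))"
    using assms by (intro abs_convergent_prod_imp_convergent_prod summable_imp_abs_convergent_prod) simp
  then show ?thesis
    unfolding One_nat_def prod.atLeast1_atMost_eq
    by (intro has_prod_imp_tendsto' convergent_prod_has_prod)
qed

lemma collector_density_LIMSEQ_pos:
  assumes ge1: "\<And>k. 1 \<le> k \<Longrightarrow> 1 \<le> a k"
    and summable: "\<And>r. summable (\<lambda>k. a (Suc k) ^ r * exp (- a (Suc k) * t))"
    and t: "0 < t"
  shows "(\<lambda>N. collector_density a n N t) \<longlonglongrightarrow> limit_density a n t"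
proof -
  define l where "l k = a k ^ Suc n * exp (- a k * t) / (1 - exp (- a k * t))" for k
  have "summable (\<lambda>k. l (Suc k))"
  proof (rule summable_comparison_test')
    show "summable (\<lambda>k. a (Suc k) ^ Suc n * exp (- a (Suc k) * t) / (1 - exp (- t)))"
      using summable by (rule summable_divide)
    fix k
    have "exp (- a (Suc k) * t) \<le> exp (- t)" using ge1[of "Suc k"] t by simp
    then show "norm (l (Suc k)) \<le> a (Suc k) ^ Suc n * exp (- a (Suc k) * t) / (1 - exp (- t))"
      unfolding l_def using ge1[of "Suc k"] t by (auto intro!: divide_left_mono)
  qed
  then have "(\<lambda>N. \<Sum>k\<in>{1..N}. l k) \<longlonglongrightarrow> Lfun a (exp (- t)) (Suc n)"
    unfolding One_nat_def sum.atLeast1_atMost_eq Lfun_def l_def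
    by (simp add: exp_powr_real mult.commute summable_LIMSEQ)
  moreover have "(\<lambda>N. \<Prod>i\<in>{1..N}. 1 - exp (- a i * t)) \<longlonglongrightarrow> Ffun a (exp (- t))"
    using LIMSEQ_prod_one_minus[of "\<lambda>i. exp (- a i * t)"] summable[of 0]
    by (simp add: Ffun_def exp_powr_real mult.commute)
  ultimately have "(\<lambda>N. (\<Prod>i\<in>{1..N}. 1 - exp (- a i * t)) * (t ^ n / fact n * (\<Sum>k\<in>{1..N}. l k)))
      \<longlonglongrightarrow> Ffun a (exp (- t)) * (t ^ n / fact n * Lfun a (exp (- t)) (Suc n))"
    by (intro tendsto_mult tendsto_const)
  moreover have "0 < a k" if "1 \<le> k" for k using ge1[OF that] by simp
  ultimately show ?thesis
    using t by (simp add: collector_density_eq_product l_def limit_density_def mult_ac)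
qed

lemma collector_density_LIMSEQ_nonpos:
  assumes "t \<le> 0"
  shows "(\<lambda>N. collector_density a n N t) \<longlonglongrightarrow> limit_density a n t"
proof (cases "t = 0")
  case True
  have "collector_density a n N 0 = 0" if "2 \<le> N" for N
    unfolding collector_density_def
  proof (intro sum.neutral ballI mult_eq_0_iff[THEN iffD2] disjI2 prod_zero)
    fix k assume "k \<in> {1..N}"
    then show "\<exists>i\<in>{1..N} - {k}. 1 - exp (- a i * 0) = 0"
      using that by (intro bexI[of _ "if k = 1 then 2 else 1"]) auto
  qed simp
  then show ?thesis
    using True by (simp add: limit_density_def LIMSEQ_offset[where k = 2] del: One_nat_def)
qed (use assms in \<open>simp add: collector_density_def erlang_density_def limit_density_def\<close>)

(* Dropping the factors with i > k makes the k-th summand of collector_density independent of N. *)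
definition collector_term :: "(nat \<Rightarrow> real) \<Rightarrow> nat \<Rightarrow> nat \<Rightarrow> real \<Rightarrow> real" where
  "collector_term a n k t = erlang_density n (a k) t * (\<Prod>i\<in>{1..<k}. 1 - exp (- a i * t))"

definition collector_majorant :: "(nat \<Rightarrow> real) \<Rightarrow> nat \<Rightarrow> real \<Rightarrow> real" where
  "collector_majorant a n t = (\<Sum>k. collector_term a n (Suc k) t)"

lemma collector_term_measurable[measurable]: "collector_term a n k \<in> borel_measurable borel"
  unfolding collector_term_def by measurable

lemma collector_majorant_measurable[measurable]: "collector_majorant a n \<in> borel_measurable borel"
  unfolding collector_majorant_def by measurable

lemma collector_term_nonneg:
  assumes "\<And>i. 0 \<le> a i" shows "0 \<le> collector_term a n k t"
proof (cases "t < 0")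
  case False
  then show ?thesis
    unfolding collector_term_def using assms prod_one_minus_exp_neg_bounds(1)[of _ a t]
    by (intro mult_nonneg_nonneg erlang_density_nonneg) auto
qed (simp add: collector_term_def erlang_density_def)

lemma collector_term_le_erlang_density:
  assumes "\<And>i. 0 \<le> a i" shows "collector_term a n k t \<le> erlang_density n (a k) t"
proof (cases "t < 0")
  case False
  then show ?thesis
    unfolding collector_term_def using assms prod_one_minus_exp_neg_bounds[of _ a t]
    by (intro mult_left_le erlang_density_nonneg) auto
qed (simp add: collector_term_def erlang_density_def)

lemma collector_majorant_nonneg:
  assumes "\<And>i. 0 \<le> a i" and "summable (\<lambda>k. collector_term a n (Suc k) t)"
  shows "0 \<le> collector_majorant a n t"
  unfolding collector_majorant_def using assms by (intro suminf_nonneg collector_term_nonneg)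

lemma summable_collector_term:
  assumes "\<And>i. 0 \<le> a i" and "0 \<le> t"
    and "summable (\<lambda>k. a (Suc k) ^ Suc n * exp (- a (Suc k) * t))"
  shows "summable (\<lambda>k. collector_term a n (Suc k) t)"
proof (rule summable_comparison_test')
  show "summable (\<lambda>k. a (Suc k) ^ Suc n * exp (- a (Suc k) * t) * (t ^ n / fact n))"
    using assms(3) by (rule summable_mult2)
  fix k
  have "norm (collector_term a n (Suc k) t) \<le> erlang_density n (a (Suc k)) t"
    using collector_term_nonneg[OF assms(1)] collector_term_le_erlang_density[OF assms(1)] by simp
  also have "\<dots> = a (Suc k) ^ Suc n * exp (- a (Suc k) * t) * (t ^ n / fact n)"
    using assms(2) by (simp add: erlang_density_def)
  finally show "norm (collector_term a n (Suc k) t) \<le> \<dots>" .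
qed

lemma collector_density_le_majorant:
  assumes nonneg: "\<And>i. 0 \<le> a i" and t: "0 \<le> t"
    and summable: "summable (\<lambda>k. collector_term a n (Suc k) t)"
  shows "collector_density a n N t \<le> collector_majorant a n t"
proof -
  have "collector_density a n N t \<le> (\<Sum>k\<in>{1..N}. collector_term a n k t)"
    unfolding collector_density_def collector_term_def
    using t nonneg prod_one_minus_exp_neg_bounds[of _ a t]
    by (intro sum_mono mult_left_mono prod_le_prod_subset erlang_density_nonneg) auto
  also have "\<dots> \<le> collector_majorant a n t"
    unfolding collector_majorant_def One_nat_def sum.atLeast1_atMost_eq
    using summable collector_term_nonneg[OF nonneg] by (intro sum_le_suminf) auto
  finally show ?thesis .
qed

lemma nn_integral_collector_term_le_one:
  assumes "\<And>i. 0 \<le> a i" and "0 < a k"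
  shows "(\<integral>\<^sup>+t. ennreal (collector_term a n k t) \<partial>lborel) \<le> 1"
proof -
  have "(\<integral>\<^sup>+t. ennreal (collector_term a n k t) \<partial>lborel)
      \<le> (\<integral>\<^sup>+t. ennreal (erlang_density n (a k) t) \<partial>lborel)"
    using assms(1) by (intro nn_integral_mono ennreal_leI collector_term_le_erlang_density)
  also have "\<dots> = 1"
    using nn_integral_erlang_ith_moment[OF assms(2), of n 0] by simp
  finally show ?thesis .
qed

lemma collector_term_le_erlang_density_half:
  assumes nonneg: "\<And>i. 0 \<le> a i" and t: "0 < t" and m: "1 \<le> m" "m < k"
    and small: "\<And>i. 1 \<le> i \<Longrightarrow> i \<le> m \<Longrightarrow> 4 * a i \<le> a k"
  shows "collector_term a n k t \<le> 2 ^ (n + 2) / real m ^ 2 * erlang_density n (a k / 2) t"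
proof -
  (* The first m factors are at most (1 - y)^m \<le> e^{-m y} \<le> 2 / (m y)^2, and 1 / y^2 = e^{a_k t / 2}
     eats up half of the exponential decay of the Erlang density. *)
  define y where "y = exp (- (a k / 4) * t)"
  have y: "0 < y" "y \<le> 1" using nonneg[of k] t by (auto simp: y_def)
  have "(\<Prod>i\<in>{1..<k}. 1 - exp (- a i * t)) \<le> (\<Prod>i\<in>{1..m}. 1 - exp (- a i * t))"
    using m t nonneg by (intro prod_le_prod_subset) auto
  also have "\<dots> \<le> (\<Prod>i\<in>{1..m}. 1 - y)"
  proof (rule prod_mono)
    fix i assume "i \<in> {1..m}"
    then have "y \<le> exp (- a i * t)"
      using small[of i] t by (simp add: y_def mult_right_mono)
    then show "0 \<le> 1 - exp (- a i * t) \<and> 1 - exp (- a i * t) \<le> 1 - y"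
      using nonneg[of i] t by simp
  qed
  also have "\<dots> = (1 - y) ^ m" by simp
  also have "\<dots> \<le> exp (- y) ^ m"
    using y exp_ge_add_one_self[of "- y"] by (intro power_mono) auto
  also have "\<dots> = exp (- (real m * y))" by (simp add: exp_of_nat_mult[symmetric])
  also have "\<dots> \<le> fact 2 / (real m * y) ^ 2"
    using m y by (intro exp_neg_le_fact_div_power) auto
  also have "\<dots> = 2 * exp (a k / 2 * t) / real m ^ 2"
  proof -
    have "y ^ 2 * exp (a k / 2 * t) = 1"
      by (simp add: y_def power2_eq_square exp_add[symmetric])
    then show ?thesis using y m by (simp add: field_simps)
  qed
  finally have "collector_term a n k t \<le> erlang_density n (a k) t * (2 * exp (a k / 2 * t) / real m ^ 2)"
    unfolding collector_term_def using nonneg[of k] by (intro mult_left_mono erlang_density_nonneg)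
  also have "erlang_density n (a k) t * exp (a k / 2 * t) = 2 ^ (n + 1) * erlang_density n (a k / 2) t"
    using t by (simp add: erlang_density_def power_mult_distrib field_simps exp_add[symmetric])
  then have "erlang_density n (a k) t * (2 * exp (a k / 2 * t) / real m ^ 2)
      = 2 ^ (n + 2) / real m ^ 2 * erlang_density n (a k / 2) t"
    by (simp add: field_simps)
  finally show ?thesis .
qed

lemma nn_integral_collector_term_le:
  assumes nonneg: "\<And>i. 0 \<le> a i" and pos: "0 < a k" and m: "1 \<le> m" "m < k"
    and small: "\<And>i. 1 \<le> i \<Longrightarrow> i \<le> m \<Longrightarrow> 4 * a i \<le> a k"
  shows "(\<integral>\<^sup>+t. ennreal (collector_term a n k t) \<partial>lborel) \<le> ennreal (2 ^ (n + 2) / real m ^ 2)"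
proof -
  define B :: real where "B = 2 ^ (n + 2) / real m ^ 2"
  have "(\<integral>\<^sup>+t. ennreal (collector_term a n k t) \<partial>lborel)
      \<le> (\<integral>\<^sup>+t. ennreal B * ennreal (erlang_density n (a k / 2) t) \<partial>lborel)"
  proof (rule nn_integral_mono_AE)
    show "AE t in lborel. ennreal (collector_term a n k t) \<le> ennreal B * ennreal (erlang_density n (a k / 2) t)"
      using AE_lborel_singleton[of 0]
    proof eventually_elim
      case (elim t)
      show ?case
      proof (cases "0 < t")
        case True
        then show ?thesis
          using collector_term_le_erlang_density_half[of a, OF nonneg True m small] pos
          by (simp add: B_def ennreal_mult[symmetric] ennreal_leI)
      next
        case False
        then have "collector_term a n k t \<le> 0"
          using elim collector_term_le_erlang_density[of a n k t, OF nonneg]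
          by (simp add: erlang_density_def)
        then show ?thesis by (metis ennreal_eq_0_iff zero_le)
      qed
    qed
  qed
  also have "\<dots> = ennreal B * (\<integral>\<^sup>+t. ennreal (erlang_density n (a k / 2) t) \<partial>lborel)"
    by (rule nn_integral_cmult) measurable
  also have "\<dots> = ennreal B"
    using nn_integral_erlang_ith_moment[of "a k / 2" n 0] pos by simp
  finally show ?thesis unfolding B_def .
qed

lemma nn_integral_powr_collector_term_le:
  assumes p: "0 < p" and k: "1 \<le> k"
  shows "(\<integral>\<^sup>+t. ennreal (collector_term (\<lambda>k. real k powr p) n k t) \<partial>lborel)
           \<le> ennreal (2 ^ (n + 4) / (4 powr (- 1 / p) * real k) ^ 2)"
proof -
  define c :: real where "c = 4 powr (- 1 / p)"
  have c_pos: "0 < c" by (simp add: c_def)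
  have c_lt_1: "c < 1" unfolding c_def using p by (intro powr_less_one) auto
  have "c powr p = 4 powr (- 1 / p * p)" unfolding c_def by (rule powr_powr)
  also have "\<dots> = 4 powr (- 1)" using p by simp
  also have "\<dots> = 1 / 4" by (simp add: powr_minus)
  finally have c_powr: "c powr p = 1 / 4" .
  have ck: "0 < c * real k" using c_pos k by simp
  have "(\<integral>\<^sup>+t. ennreal (collector_term (\<lambda>k. real k powr p) n k t) \<partial>lborel)
      \<le> ennreal (2 ^ (n + 4) / (c * real k) ^ 2)"
  proof (cases "2 \<le> c * real k")
    case True
    define m where "m = nat \<lfloor>c * real k\<rfloor>"
    have m_le: "real m \<le> c * real k" and m_ge: "c * real k / 2 \<le> real m"
      using True by (simp_all add: m_def) linarith+
    have "c * real k < real k" using c_lt_1 k by simp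
    then have m: "1 \<le> m" "m < k" using m_ge m_le True by linarith+
    have small: "4 * real i powr p \<le> real k powr p" if "i \<le> m" for i
    proof -
      have "real i powr p \<le> (c * real k) powr p"
        using that m_le p by (intro powr_mono2) auto
      also have "\<dots> = real k powr p / 4" using c_pos c_powr k by (simp add: powr_mult)
      finally show ?thesis by simp
    qed
    have "(c * real k) ^ 2 / 4 \<le> real m ^ 2"
      using power_mono[OF m_ge, of 2] ck by (simp add: power_divide)
    then have "2 ^ (n + 4) / (4 * real m ^ 2) \<le> 2 ^ (n + 4) / (c * real k) ^ 2"
      using ck m by (intro divide_left_mono mult_pos_pos) auto
    then have "2 ^ (n + 2) / real m ^ 2 \<le> 2 ^ (n + 4) / (c * real k) ^ 2"
      by (simp add: power_add)
    moreover have "(\<integral>\<^sup>+t. ennreal (collector_term (\<lambda>k. real k powr p) n k t) \<partial>lborel)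
        \<le> ennreal (2 ^ (n + 2) / real m ^ 2)"
      using m small k by (intro nn_integral_collector_term_le) auto
    ultimately show ?thesis using ennreal_leI order.trans by blast
  next
    case False
    have "(c * real k) ^ 2 \<le> 2 ^ 2" using False ck by (intro power_mono) auto
    also have "(2::real) ^ 2 \<le> 2 ^ (n + 4)" by (intro power_increasing) auto
    finally have "1 \<le> 2 ^ (n + 4) / (c * real k) ^ 2" using ck c_pos k by (simp add: le_divide_eq)
    moreover have "(\<integral>\<^sup>+t. ennreal (collector_term (\<lambda>k. real k powr p) n k t) \<partial>lborel) \<le> 1"
      using k by (intro nn_integral_collector_term_le_one) auto
    ultimately show ?thesis using ennreal_leI[of 1] order.trans by fastforce
  qed
  then show ?thesis by (simp add: c_def)
qed

lemma powr_collector_term_sums: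
  assumes p: "0 < p" and t: "t \<noteq> 0"
  shows "(\<lambda>k. collector_term (\<lambda>k. real k powr p) n (Suc k) t)
           sums collector_majorant (\<lambda>k. real k powr p) n t"
proof (cases "0 < t")
  case True
  then show ?thesis
    unfolding collector_majorant_def
    by (intro summable_sums summable_collector_term summable_powr_weights_exp p) auto
next
  case False
  with t have "collector_term (\<lambda>k. real k powr p) n k t = 0" for k
    by (simp add: collector_term_def erlang_density_def)
  then show ?thesis by (simp add: collector_majorant_def)
qed

lemma integrable_powr_collector_majorant:
  assumes p: "0 < p"
  shows "integrable lborel (collector_majorant (\<lambda>k. real k powr p) n)"
proof (rule integrableI_nonneg)
  let ?a = "\<lambda>k. real k powr p" and ?c = "4 powr (- 1 / p) :: real"
  have sums: "AE t in lborel. (\<lambda>k. collector_term ?a n (Suc k) t) sums collector_majorant ?a n t"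
    using AE_lborel_singleton[of 0] by eventually_elim (rule powr_collector_term_sums[OF p])
  then show "AE t in lborel. 0 \<le> collector_majorant ?a n t"
    by eventually_elim (auto intro: collector_majorant_nonneg sums_summable)
  have "summable (\<lambda>k. inverse (real k ^ 2))" by (rule inverse_power_summable) simp
  then have "summable (\<lambda>k. inverse (real (Suc k) ^ 2))"
    by (rule summable_Suc_iff[of "\<lambda>k. inverse (real k ^ 2)", THEN iffD2])
  then have "summable (\<lambda>k. 2 ^ (n + 4) / ?c ^ 2 * inverse (real (Suc k) ^ 2))"
    by (rule summable_mult)
  then have bound_summable: "summable (\<lambda>k. 2 ^ (n + 4) / (?c * real (Suc k)) ^ 2)"
    by (rule summable_cong[THEN iffD1, rotated])
      (intro always_eventually allI, simp add: power_mult_distrib divide_inverse)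
  have "(\<integral>\<^sup>+t. ennreal (collector_majorant ?a n t) \<partial>lborel)
      = (\<integral>\<^sup>+t. (\<Sum>k. ennreal (collector_term ?a n (Suc k) t)) \<partial>lborel)"
    using sums
  proof (rule nn_integral_cong_AE[OF eventually_mono])
    fix t assume t: "(\<lambda>k. collector_term ?a n (Suc k) t) sums collector_majorant ?a n t"
    have "(\<Sum>k. ennreal (collector_term ?a n (Suc k) t)) = ennreal (\<Sum>k. collector_term ?a n (Suc k) t)"
      by (rule suminf_ennreal2[OF collector_term_nonneg sums_summable[OF t]]) simp
    then show "ennreal (collector_majorant ?a n t) = (\<Sum>k. ennreal (collector_term ?a n (Suc k) t))"
      by (simp only: sums_unique[OF t, symmetric])
  qed
  also have "\<dots> = (\<Sum>k. \<integral>\<^sup>+t. ennreal (collector_term ?a n (Suc k) t) \<partial>lborel)"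
    by (intro nn_integral_suminf) measurable
  also have "\<dots> \<le> (\<Sum>k. ennreal (2 ^ (n + 4) / (?c * real (Suc k)) ^ 2))"
    by (intro suminf_le summableI nn_integral_powr_collector_term_le[OF p]) simp
  also have "\<dots> = ennreal (\<Sum>k. 2 ^ (n + 4) / (?c * real (Suc k)) ^ 2)"
    using bound_summable by (intro suminf_ennreal2) auto
  finally show "(\<integral>\<^sup>+t. ennreal (collector_majorant ?a n t) \<partial>lborel) < \<infinity>"
    by (rule order.strict_trans1) simp
qed simp

lemma powr_collector_density_LIMSEQ:
  assumes p: "0 < p"
  shows "(\<lambda>N. collector_density (\<lambda>k. real k powr p) n N t) \<longlonglongrightarrow> limit_density (\<lambda>k. real k powr p) n t"
proof (cases "0 < t")
  case True
  then show ?thesis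
    using p by (intro collector_density_LIMSEQ_pos summable_powr_weights_exp)
      (auto simp: ge_one_powr_ge_zero)
qed (simp add: collector_density_LIMSEQ_nonpos)

lemma powr_collector_density_dominated_convergence:
  assumes p: "0 < p"
  shows "integrable lborel (limit_density (\<lambda>k. real k powr p) n)"
    and "(\<lambda>N. LINT t|lborel. collector_density (\<lambda>k. real k powr p) n N t)
           \<longlonglongrightarrow> (LINT t|lborel. limit_density (\<lambda>k. real k powr p) n t)"
proof -
  let ?a = "\<lambda>k. real k powr p"
  have limit_measurable: "limit_density ?a n \<in> borel_measurable lborel"
    by (rule borel_measurable_LIMSEQ_real[OF powr_collector_density_LIMSEQ[OF p]]) simp
  have dominated: "AE t in lborel. norm (collector_density ?a n N t) \<le> collector_majorant ?a n t" for N
    using AE_lborel_singleton[of 0]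
  proof eventually_elim
    case (elim t)
    show ?case
    proof (cases "0 < t")
      case True
      then show ?thesis
        using collector_density_nonneg collector_density_le_majorant
          sums_summable[OF powr_collector_term_sums[OF p elim]]
        by simp
    next
      case False
      with elim have "collector_density ?a n N t = 0"
        by (simp add: collector_density_def erlang_density_def)
      then show ?thesis
        using collector_majorant_nonneg sums_summable[OF powr_collector_term_sums[OF p elim]]
        by simp
    qed
  qed
  note dc = limit_measurable _ integrable_powr_collector_majorant[OF p]
    AE_I2[OF powr_collector_density_LIMSEQ[OF p]] dominated
  show "integrable lborel (limit_density ?a n)"
    by (rule integrable_dominated_convergence[OF dc]) simp
  show "(\<lambda>N. LINT t|lborel. collector_density ?a n N t) \<longlonglongrightarrow> (LINT t|lborel. limit_density ?a n t)"
    by (rule integral_dominated_convergence[OF dc]) simp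
qed

lemma set_integrable_lborel_iff_absolutely_integrable_on:
  fixes f :: "real \<Rightarrow> real"
  assumes "set_borel_measurable borel S f"
  shows "set_integrable lborel S f \<longleftrightarrow> f absolutely_integrable_on S"
  using assms unfolding set_integrable_def set_borel_measurable_def
  by (simp add: integrable_completion)

lemma set_integral_exp_neg_substitution:
  fixes f :: "real \<Rightarrow> real"
  assumes meas: "set_borel_measurable borel {0<..<1} f"
    and int: "set_integrable lborel {0<..} (\<lambda>t. exp (- t) * f (exp (- t)))"
  shows "set_integrable lborel {0<..<1} f"
    and "(LBINT x:{0<..<1}. f x) = (LBINT t:{0<..}. exp (- t) * f (exp (- t)))"
proof -
  have image: "(\<lambda>t. exp (- t)) ` {0<..} = {0<..<1::real}"
  proof (intro equalityI subsetI)
    fix x :: real assume "x \<in> {0<..<1}"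
    then show "x \<in> (\<lambda>t. exp (- t)) ` {0<..}" by (intro image_eqI[of _ _ "- ln x"]) auto
  qed auto
  have "(\<lambda>t. \<bar>- exp (- t)\<bar> * f (exp (- t))) absolutely_integrable_on {0<..} \<and>
        integral {0<..} (\<lambda>t. \<bar>- exp (- t)\<bar> * f (exp (- t))) = (LBINT t:{0<..}. exp (- t) * f (exp (- t)))"
  proof -
    have "set_borel_measurable borel {0<..} (\<lambda>t. exp (- t) * f (exp (- t)))"
      using borel_measurable_integrable[OF int[unfolded set_integrable_def]]
      by (simp add: set_borel_measurable_def)
    then show ?thesis
      using int set_borel_integral_eq_integral(2)[OF int]
        set_integrable_lborel_iff_absolutely_integrable_on by simp
  qed
  then have "f absolutely_integrable_on {0<..<1} \<and>
             integral {0<..<1} f = (LBINT t:{0<..}. exp (- t) * f (exp (- t)))"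
    by (subst (asm) has_absolute_integral_change_of_variables_1'[where g = "\<lambda>t. exp (- t)"])
       (auto simp: image inj_on_def intro!: derivative_eq_intros)
  then show int': "set_integrable lborel {0<..<1} f"
    using set_integrable_lborel_iff_absolutely_integrable_on[OF meas] by simp
  show "(LBINT x:{0<..<1}. f x) = (LBINT t:{0<..}. exp (- t) * f (exp (- t)))"
    using set_borel_integral_eq_integral(2)[OF int'] \<open>f absolutely_integrable_on _ \<and> _\<close> by simp
qed

lemma Iint_integrand_exp_neg:
  assumes "0 < t"
  shows "exp (- t) * Iint_integrand a (Suc n) (exp (- t)) = fact n * limit_density a n t"
  using assms by (simp add: Iint_integrand_def limit_density_def)

lemma Iint_integrand_eq_limit_density:
  assumes "x \<in> {0<..<1}"
  shows "Iint_integrand a (Suc n) x = fact n * limit_density a n (- ln x) / x"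
  using Iint_integrand_exp_neg[of "- ln x" a n] assms by (simp add: field_simps)

lemma Iint_eq_integral_limit_density:
  assumes xa: "x_alpha a = 1"
    and int: "integrable lborel (limit_density a n)"
  shows "set_integrable lborel {0<..<1} (Iint_integrand a (Suc n))"
    and "Iint a (Suc n) = (LINT t|lborel. limit_density a n t)"
proof -
  have [measurable]: "limit_density a n \<in> borel_measurable borel"
    using borel_measurable_integrable[OF int] by simp
  have restrict: "(\<lambda>t. indicator {0<..} t *\<^sub>R (exp (- t) * Iint_integrand a (Suc n) (exp (- t))))
      = (\<lambda>t. fact n * limit_density a n t)"
    by (auto simp: Iint_integrand_exp_neg limit_density_def indicator_def)
  have "set_integrable lborel {0<..} (\<lambda>t. exp (- t) * Iint_integrand a (Suc n) (exp (- t)))"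
    using int unfolding set_integrable_def restrict by simp
  moreover have "set_borel_measurable borel {0<..<1} (Iint_integrand a (Suc n))"
  proof -
    have "(\<lambda>x. indicator {0<..<1} x * (fact n * limit_density a n (- ln x) / x)) \<in> borel_measurable borel"
      by measurable
    then show ?thesis
      unfolding set_borel_measurable_def
      by (rule measurable_cong[THEN iffD1, rotated])
         (auto simp: Iint_integrand_eq_limit_density indicator_def)
  qed
  ultimately have subst: "set_integrable lborel {0<..<1} (Iint_integrand a (Suc n))"
      "(LBINT x:{0<..<1}. Iint_integrand a (Suc n) x)
         = (LBINT t:{0<..}. exp (- t) * Iint_integrand a (Suc n) (exp (- t)))"
    by (simp_all add: set_integral_exp_neg_substitution)
  then show "set_integrable lborel {0<..<1} (Iint_integrand a (Suc n))" by blast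
  have "(LBINT t:{0<..}. exp (- t) * Iint_integrand a (Suc n) (exp (- t)))
      = fact n * (LINT t|lborel. limit_density a n t)"
    unfolding set_lebesgue_integral_def restrict by simp
  then show "Iint a (Suc n) = (LINT t|lborel. limit_density a n t)"
    using subst(2) by (simp add: Iint_def xa)
qed

theorem mainTheorem12:
  fixes p :: real and j :: nat
  assumes "p > 0" and "j \<ge> 2"
  shows "set_integrable lborel {0<..<x_alpha (\<lambda>k. real k powr p)}
           (Iint_integrand (\<lambda>k. real k powr p) j)
         \<and> (\<lambda>N. EU (\<lambda>k. real k powr p) N j) \<longlonglongrightarrow> Iint (\<lambda>k. real k powr p) j"
proof -
  let ?a = "\<lambda>k. real k powr p"
  obtain n where j: "j = Suc n" using assms(2) by (cases j) auto
  note Iint = Iint_eq_integral_limit_density[OF x_alpha_powr_weights[OF assms(1)]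
      powr_collector_density_dominated_convergence(1)[OF assms(1)]]
  have "EU ?a N j = (LINT t|lborel. collector_density ?a n N t)" for N
    unfolding j by (rule EU_eq_integral_collector_density) auto
  then show ?thesis
    using Iint powr_collector_density_dominated_convergence(2)[OF assms(1)]
    by (simp add: j x_alpha_powr_weights[OF assms(1)])
qed

end
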